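(* Against an oblivious adversary, it is possible to gather two robots having the same speed if, for both robots, the sum of the wait time and the computation delay in every cycle is always greater than some fixed value $\tau>0$: there is a randomized algorithm such that the robots gather with positive probability.
   Context: Two robots are anonymous, oblivious (no memory of past cycles), silent (no communication) points in the Euclidean plane with no common coordinate system, each having access to random bits. Each robot repeatedly executes a cycle: it waits (wait time $\mathcal{W}\ge 0$), looks (obtains a snapshot of the other robot's current position, which may be in motion), has a computation delay $\mathcal{C}\ge0$, then moves to a destination computed from the snapshot and its random bits, reaching it in the same cycle (rigid movement). A robot that looks and finds the other robot at its own position decides it has gathered and stops; gathering means both robots are at the same point. The scheduler is an adversary choosing the wait times and computation delays of all cycles, subject to $\mathcal{W}+\mathcal{C}>\tau$ in every cycle of each robot; an oblivious adversary knows the algorithm but not the outcomes of random bits, so it fixes all these values before the execution. *)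

theory Defs
  imports "HOL-Probability.Probability"
begin

type_synonym point = "real ^ 2"

text \<open>Robots are indexed by bool; the other robot of r is (\<not> r).\<close>

text \<open>Unit, orientation, handedness and origin
  are unknown to the robot and chosen by the adversary.\<close>
definition is_similarity :: "(point \<Rightarrow> point) \<Rightarrow> bool" where
  "is_similarity f \<longleftrightarrow>
     (\<exists>c U b. c > 0 \<and> orthogonal_transformation U \<and> (\<forall>x. f x = c *\<^sub>R U x + b))"

text \<open>Source of randomness: independent fair coins; bit i of robot r in cycle k
  is the coordinate (r,k,i).\<close>
definition coin_space :: "(bool \<times> nat \<times> nat \<Rightarrow> bool) measure" where
  "coin_space = PiM UNIV (\<lambda>_. measure_pmf (bernoulli_pmf (1/2)))"

text \<open>An (anonymous, oblivious) algorithm: given the robot's own position and the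
  snapshot of the other robot, both in local coordinates, and a stream of random
  bits, it returns the destination in local coordinates.\<close>
type_synonym algorithm = "point \<Rightarrow> point \<Rightarrow> (nat \<Rightarrow> bool) \<Rightarrow> point"

definition look_time :: "(bool \<Rightarrow> nat \<Rightarrow> real) \<Rightarrow> (bool \<Rightarrow> nat \<Rightarrow> real) \<Rightarrow> bool \<Rightarrow> nat \<Rightarrow> real" where
  "look_time S W r k = S r k + W r k"

definition halts_at ::
  "(bool \<Rightarrow> real \<Rightarrow> point) \<Rightarrow> (bool \<Rightarrow> nat \<Rightarrow> real) \<Rightarrow> (bool \<Rightarrow> nat \<Rightarrow> real) \<Rightarrow> bool \<Rightarrow> nat \<Rightarrow> bool" where
  "halts_at pos S W r k \<longleftrightarrow>
     pos (\<not> r) (look_time S W r k) = pos r (look_time S W r k)"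

text \<open>Cycle k of robot r is executed according to the model:
  wait W (stationary), look at time S+W, compute for C (stationary), then move
  rigidly along the straight segment at speed v to the destination, which ends
  the cycle; or, if the other robot is seen at its own position, stop forever.\<close>
definition cycle_ok ::
  "algorithm \<Rightarrow> real \<Rightarrow> (bool \<Rightarrow> nat \<Rightarrow> real) \<Rightarrow> (bool \<Rightarrow> nat \<Rightarrow> real) \<Rightarrow>
   (bool \<Rightarrow> point \<Rightarrow> point) \<Rightarrow> (bool \<times> nat \<times> nat \<Rightarrow> bool) \<Rightarrow>
   (bool \<Rightarrow> real \<Rightarrow> point) \<Rightarrow> (bool \<Rightarrow> nat \<Rightarrow> real) \<Rightarrow> bool \<Rightarrow> nat \<Rightarrow> bool" where
  "cycle_ok alg v W C \<phi> \<omega> pos S r k \<longleftrightarrow>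
     (let L = look_time S W r k; q = pos r (S r k); s = pos (\<not> r) L in
       (\<forall>t. S r k \<le> t \<and> t \<le> L + C r k \<longrightarrow> pos r t = q) \<and>
       (if s = q then (\<forall>t \<ge> S r k. pos r t = q)
        else (\<exists>d. \<phi> r d = alg (\<phi> r q) (\<phi> r s) (\<lambda>i. \<omega> (r, k, i)) \<and>
                  S r (Suc k) = L + C r k + dist q d / v \<and>
                  (\<forall>t. L + C r k \<le> t \<and> t \<le> S r (Suc k) \<longrightarrow>
                       pos r t = q + ((t - (L + C r k)) * v / dist q d) *\<^sub>R (d - q)))))"

definition exec_ok ::
  "algorithm \<Rightarrow> real \<Rightarrow> (bool \<Rightarrow> nat \<Rightarrow> real) \<Rightarrow> (bool \<Rightarrow> nat \<Rightarrow> real) \<Rightarrow>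
   (bool \<Rightarrow> point \<Rightarrow> point) \<Rightarrow> (bool \<Rightarrow> point) \<Rightarrow> (bool \<times> nat \<times> nat \<Rightarrow> bool) \<Rightarrow>
   (bool \<Rightarrow> real \<Rightarrow> point) \<Rightarrow> (bool \<Rightarrow> nat \<Rightarrow> real) \<Rightarrow> bool" where
  "exec_ok alg v W C \<phi> p0 \<omega> pos S \<longleftrightarrow>
     (\<forall>r. S r 0 = 0 \<and> pos r 0 = p0 r \<and>
          (\<forall>k. (\<forall>j<k. \<not> halts_at pos S W r j) \<longrightarrow> cycle_ok alg v W C \<phi> \<omega> pos S r k))"

definition gathered :: "(bool \<Rightarrow> real \<Rightarrow> point) \<Rightarrow> bool" where
  "gathered pos \<longleftrightarrow> (\<exists>T. \<forall>t \<ge> T. pos True t = pos False t)"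

definition gather_event ::
  "algorithm \<Rightarrow> real \<Rightarrow> (bool \<Rightarrow> nat \<Rightarrow> real) \<Rightarrow> (bool \<Rightarrow> nat \<Rightarrow> real) \<Rightarrow>
   (bool \<Rightarrow> point \<Rightarrow> point) \<Rightarrow> (bool \<Rightarrow> point) \<Rightarrow> (bool \<times> nat \<times> nat \<Rightarrow> bool) set" where
  "gather_event alg v W C \<phi> p0 =
     {\<omega>. (\<exists>pos S. exec_ok alg v W C \<phi> p0 \<omega> pos S) \<and>
          (\<forall>pos S. exec_ok alg v W C \<phi> p0 \<omega> pos S \<longrightarrow> gathered pos)}"

end

theory Submission
  imports Defs
begin

text \<open>Each robot flips a coin in every cycle: on heads it moves to the position of the
  other robot it has just observed, on tails it stays.  As the oblivious adversary fixes the
  schedule in advance, we may choose N such that N \<tau> exceeds the time of the second look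
  of robot True, which depends only on the schedule and the initial positions.  With
  probability 2^-(N+1) robot True flips heads in its first cycle and robot False tails in its
  first N cycles.  Then robot False stays at its initial position, since these N cycles last
  longer than N \<tau>; robot True reaches that position during its first cycle and halts at
  its second look; and robot False, still there, sees it at its own position at the latest at
  its (N+1)-st look and halts as well.\<close>

definition coin_alg :: algorithm where
  "coin_alg own other bits = (if bits 0 then other else own)"

lemma similarity_inj:
  assumes "is_similarity f"
  shows "inj f"
proof (rule injI)
  fix x y assume "f x = f y"
  obtain c U b where "c > 0" "orthogonal_transformation U" "\<forall>x. f x = c *\<^sub>R U x + b"
    using assms unfolding is_similarity_def by blast
  with \<open>f x = f y\<close> have "U x = U y" by simp
  then show "x = y"
    using orthogonal_transformation_inj[OF \<open>orthogonal_transformation U\<close>] by (auto dest: injD)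
qed

lemma coin_space_cylinder:
  fixes J :: "(bool \<times> nat \<times> nat) set" and b :: "bool \<times> nat \<times> nat \<Rightarrow> bool"
  assumes "finite J"
  defines "E \<equiv> {\<omega>. \<forall>i\<in>J. \<omega> i = b i}"
  shows "E \<in> sets coin_space" and "measure coin_space E = (1/2) ^ card J"
proof -
  let ?M = "\<lambda>_::bool \<times> nat \<times> nat. measure_pmf (bernoulli_pmf (1/2))"
  have E_emb: "E = prod_emb UNIV ?M J (Pi\<^sub>E J (\<lambda>i. {b i}))"
    unfolding E_def prod_emb_def space_PiM by (intro set_eqI) (simp add: PiE_iff)
  show "E \<in> sets coin_space"
    unfolding E_emb coin_space_def by (rule sets_PiM_I) (auto simp: assms)
  have "emeasure coin_space E = (\<Prod>i\<in>J. emeasure (?M i) {b i})"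
    unfolding E_emb coin_space_def
    by (rule emeasure_PiM_emb) (auto simp: assms prob_space_measure_pmf)
  also have "\<dots> = (\<Prod>i\<in>J. ennreal (1/2))"
    by (intro prod.cong refl) (simp add: emeasure_pmf_single)
  also have "\<dots> = ennreal ((1/2) ^ card J)"
    by (simp only: prod_constant ennreal_power[symmetric])
  finally show "measure coin_space E = (1/2) ^ card J"
    by (simp add: measure_def)
qed

lemma cycle_ok_still:
  assumes "cycle_ok alg v W C \<phi> \<omega> pos S r k" "S r k \<le> t" "t \<le> look_time S W r k + C r k"
  shows "pos r t = pos r (S r k)"
  using assms unfolding cycle_ok_def Let_def by blast

lemma cycle_ok_pos_at_look:
  assumes "cycle_ok alg v W C \<phi> \<omega> pos S r k" "W r k \<ge> 0" "C r k \<ge> 0"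
  shows "pos r (look_time S W r k) = pos r (S r k)"
  using assms by (intro cycle_ok_still) (auto simp: look_time_def)

lemma cycle_ok_halted:
  assumes "cycle_ok alg v W C \<phi> \<omega> pos S r k" "halts_at pos S W r k" "W r k \<ge> 0" "C r k \<ge> 0"
    and "S r k \<le> t"
  shows "pos r t = pos r (S r k)"
proof -
  have seen: "pos (\<not> r) (look_time S W r k) = pos r (S r k)"
    using assms(2) cycle_ok_pos_at_look[OF assms(1,3,4)] by (simp add: halts_at_def)
  have "\<forall>t \<ge> S r k. pos r t = pos r (S r k)"
    using conjunct2[OF assms(1)[unfolded cycle_ok_def Let_def]] unfolding if_P[OF seen] .
  then show ?thesis
    using assms(5) by blast
qed

lemma cycle_ok_moving:
  assumes "cycle_ok alg v W C \<phi> \<omega> pos S r k" "\<not> halts_at pos S W r k" "W r k \<ge> 0" "C r k \<ge> 0"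
  obtains d where
    "\<phi> r d = alg (\<phi> r (pos r (S r k))) (\<phi> r (pos (\<not> r) (look_time S W r k))) (\<lambda>i. \<omega> (r, k, i))"
    "S r (Suc k) = look_time S W r k + C r k + dist (pos r (S r k)) d / v"
    "\<And>t. look_time S W r k + C r k \<le> t \<Longrightarrow> t \<le> S r (Suc k) \<Longrightarrow>
      pos r t = pos r (S r k) + ((t - (look_time S W r k + C r k)) * v / dist (pos r (S r k)) d) *\<^sub>R (d - pos r (S r k))"
proof -
  let ?q = "pos r (S r k)" and ?s = "pos (\<not> r) (look_time S W r k)"
    and ?m = "look_time S W r k + C r k"
  have apart: "?s \<noteq> ?q"
    using assms(2) cycle_ok_pos_at_look[OF assms(1,3,4)] by (simp add: halts_at_def)
  have "if ?s = ?q then \<forall>t \<ge> S r k. pos r t = ?q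
    else \<exists>d. \<phi> r d = alg (\<phi> r ?q) (\<phi> r ?s) (\<lambda>i. \<omega> (r, k, i)) \<and>
      S r (Suc k) = ?m + dist ?q d / v \<and>
      (\<forall>t. ?m \<le> t \<and> t \<le> S r (Suc k) \<longrightarrow> pos r t = ?q + ((t - ?m) * v / dist ?q d) *\<^sub>R (d - ?q))"
    using assms(1) unfolding cycle_ok_def Let_def by (rule conjunct2)
  then show ?thesis
    unfolding if_not_P[OF apart] using that by blast
qed

lemma cycle_ok_coin_stay:
  assumes "cycle_ok coin_alg v W C \<phi> \<omega> pos S r k" "\<not> halts_at pos S W r k" "\<not> \<omega> (r, k, 0)"
    and "inj (\<phi> r)" "W r k \<ge> 0" "C r k \<ge> 0"
  shows "S r (Suc k) = look_time S W r k + C r k"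
proof -
  obtain d where "\<phi> r d = \<phi> r (pos r (S r k))"
      and "S r (Suc k) = look_time S W r k + C r k + dist (pos r (S r k)) d / v"
    using cycle_ok_moving[OF assms(1,2,5,6)] assms(3) by (auto simp: coin_alg_def)
  with assms(4) show ?thesis by (auto dest: injD)
qed

lemma cycle_ok_coin_go:
  assumes "cycle_ok coin_alg v W C \<phi> \<omega> pos S r k" "\<not> halts_at pos S W r k" "\<omega> (r, k, 0)"
    and "inj (\<phi> r)" "W r k \<ge> 0" "C r k \<ge> 0" "v > 0"
  shows "S r (Suc k) = look_time S W r k + C r k + dist (pos r (S r k)) (pos (\<not> r) (look_time S W r k)) / v"
    and "pos r (S r (Suc k)) = pos (\<not> r) (look_time S W r k)"
proof -
  let ?q = "pos r (S r k)" and ?s = "pos (\<not> r) (look_time S W r k)"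
    and ?m = "look_time S W r k + C r k"
  have "?s \<noteq> ?q"
    using assms(2) cycle_ok_pos_at_look[OF assms(1,5,6)] by (simp add: halts_at_def)
  obtain d where "\<phi> r d = \<phi> r ?s" and S_next: "S r (Suc k) = ?m + dist ?q d / v"
    and path: "\<And>t. ?m \<le> t \<Longrightarrow> t \<le> S r (Suc k) \<Longrightarrow>
      pos r t = ?q + ((t - ?m) * v / dist ?q d) *\<^sub>R (d - ?q)"
    using cycle_ok_moving[OF assms(1,2,5,6)] assms(3) by (auto simp: coin_alg_def)
  with assms(4) have "d = ?s" by (auto dest: injD)
  with S_next show "S r (Suc k) = ?m + dist ?q ?s / v" by simp
  have "(S r (Suc k) - ?m) * v / dist ?q ?s = 1"
    using S_next \<open>d = ?s\<close> \<open>?s \<noteq> ?q\<close> \<open>v > 0\<close> by simp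
  then show "pos r (S r (Suc k)) = ?s"
    using path[of "S r (Suc k)"] S_next \<open>d = ?s\<close> \<open>v > 0\<close> by simp
qed

lemma cycle_ok_idleI:
  assumes stays: "\<And>t. S r k \<le> t \<Longrightarrow> pos r t = pos r (S r k)"
    and "W r k \<ge> 0" "C r k \<ge> 0"
    and stay_chosen: "pos (\<not> r) (look_time S W r k) \<noteq> pos r (S r k) \<Longrightarrow>
      S r (Suc k) = look_time S W r k + C r k \<and>
      alg (\<phi> r (pos r (S r k))) (\<phi> r (pos (\<not> r) (look_time S W r k))) (\<lambda>i. \<omega> (r, k, i))
        = \<phi> r (pos r (S r k))"
  shows "cycle_ok alg v W C \<phi> \<omega> pos S r k"
proof -
  let ?q = "pos r (S r k)" and ?L = "look_time S W r k"
  have "S r k \<le> ?L + C r k"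
    using assms(2,3) by (simp add: look_time_def)
  then have stay_move: "\<exists>d. \<phi> r d = alg (\<phi> r ?q) (\<phi> r (pos (\<not> r) ?L)) (\<lambda>i. \<omega> (r, k, i)) \<and>
      S r (Suc k) = ?L + C r k + dist ?q d / v \<and>
      (\<forall>t. ?L + C r k \<le> t \<and> t \<le> S r (Suc k) \<longrightarrow>
        pos r t = ?q + ((t - (?L + C r k)) * v / dist ?q d) *\<^sub>R (d - ?q))"
    if "pos (\<not> r) ?L \<noteq> ?q"
  proof (intro exI[of _ ?q] conjI allI impI)
    show "\<phi> r ?q = alg (\<phi> r ?q) (\<phi> r (pos (\<not> r) ?L)) (\<lambda>i. \<omega> (r, k, i))"
      using stay_chosen[OF that] by simp
    show "S r (Suc k) = ?L + C r k + dist ?q ?q / v"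
      using stay_chosen[OF that] by simp
    fix t assume "?L + C r k \<le> t \<and> t \<le> S r (Suc k)"
    then show "pos r t = ?q + ((t - (?L + C r k)) * v / dist ?q ?q) *\<^sub>R (?q - ?q)"
      using stays[of t] \<open>S r k \<le> ?L + C r k\<close> by simp
  qed
  have still: "\<forall>t. S r k \<le> t \<and> t \<le> ?L + C r k \<longrightarrow> pos r t = ?q"
    and stop: "\<forall>t \<ge> S r k. pos r t = ?q"
    using stays by blast+
  show ?thesis
  proof (cases "pos (\<not> r) ?L = ?q")
    case True
    show ?thesis
      unfolding cycle_ok_def Let_def if_P[OF True] using still stop by (rule conjI)
  next
    case False
    show ?thesis
      unfolding cycle_ok_def Let_def if_not_P[OF False] using still stay_move[OF False] by (rule conjI)
  qed
qed

locale oblivious_schedule =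
  fixes \<tau> v :: real and W C :: "bool \<Rightarrow> nat \<Rightarrow> real"
    and \<phi> :: "bool \<Rightarrow> point \<Rightarrow> point" and p0 :: "bool \<Rightarrow> point"
  assumes tau_pos: "\<tau> > 0" and speed_pos: "v > 0"
    and wait_nonneg: "W r k \<ge> 0" and delay_nonneg: "C r k \<ge> 0"
    and cycle_gt_tau: "W r k + C r k > \<tau>"
    and frames_similar: "is_similarity (\<phi> r)"
begin

lemma frame_inj: "inj (\<phi> r)"
  using frames_similar by (rule similarity_inj)

text \<open>If robot True moves in its first cycle, it leaves p0 True at time departure,
  reaches p0 False at time arrival and looks again at arrival + W True 1; the first
  patience cycles of robot False last at least until then.\<close>

definition departure :: real where
  "departure = W True 0 + C True 0"

definition arrival :: real where
  "arrival = departure + dist (p0 True) (p0 False) / v"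

definition patience :: nat where
  "patience = nat \<lceil>(arrival + W True 1) / \<tau>\<rceil>"

definition lucky :: "(bool \<times> nat \<times> nat \<Rightarrow> bool) \<Rightarrow> bool" where
  "lucky \<omega> \<longleftrightarrow> \<omega> (True, 0, 0) \<and> (\<forall>k<patience. \<not> \<omega> (False, k, 0))"

lemma departure_nonneg: "0 \<le> departure"
  using wait_nonneg delay_nonneg by (simp add: departure_def)

lemma departure_le_arrival: "departure \<le> arrival"
  using speed_pos by (simp add: arrival_def)

lemma second_look_le_patience: "arrival + W True 1 \<le> real patience * \<tau>"
proof -
  have "arrival + W True 1 \<ge> 0"
    using departure_nonneg departure_le_arrival wait_nonneg[of True 1] by linarith
  then have "(arrival + W True 1) / \<tau> \<le> real patience"
    unfolding patience_def using tau_pos by (simp add: real_nat_ceiling_ge)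
  then show ?thesis
    using tau_pos by (simp add: field_simps)
qed

lemma lucky_coins_measure:
  "{\<omega>. lucky \<omega>} \<in> sets coin_space" "measure coin_space {\<omega>. lucky \<omega>} > 0"
proof -
  define J where "J = insert (True, 0, 0) ((\<lambda>k. (False, k, 0::nat)) ` {..<patience})"
  have "{\<omega>. lucky \<omega>} = {\<omega>. \<forall>i\<in>J. \<omega> i = (i = (True, 0, 0))}"
    by (auto simp: lucky_def J_def)
  moreover have "finite J"
    by (simp add: J_def)
  ultimately show "{\<omega>. lucky \<omega>} \<in> sets coin_space" "measure coin_space {\<omega>. lucky \<omega>} > 0"
    using coin_space_cylinder by simp_all
qed

lemma lucky_waiter_stays:
  assumes exec: "exec_ok coin_alg v W C \<phi> p0 \<omega> pos S" and "lucky \<omega>"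
  shows "k \<le> patience \<Longrightarrow> \<forall>j<k. \<not> halts_at pos S W False j \<Longrightarrow>
    real k * \<tau> \<le> S False k \<and> (\<forall>t. 0 \<le> t \<and> t \<le> S False k \<longrightarrow> pos False t = p0 False)"
proof (induction k)
  case 0
  then show ?case using exec unfolding exec_ok_def by auto
next
  case (Suc k)
  then have IH: "real k * \<tau> \<le> S False k" "\<forall>t. 0 \<le> t \<and> t \<le> S False k \<longrightarrow> pos False t = p0 False"
    by simp_all
  have "0 \<le> S False k"
    using tau_pos by (intro order_trans[OF _ IH(1)]) simp
  then have at_start: "pos False (S False k) = p0 False"
    using IH(2) by simp
  have cyc: "cycle_ok coin_alg v W C \<phi> \<omega> pos S False k"
    using exec Suc.prems unfolding exec_ok_def by auto
  have "\<not> \<omega> (False, k, 0)"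
    using \<open>lucky \<omega>\<close> Suc.prems by (simp add: lucky_def)
  then have next_start: "S False (Suc k) = S False k + W False k + C False k"
    using cycle_ok_coin_stay[OF cyc _ _ frame_inj wait_nonneg delay_nonneg] Suc.prems
    by (simp add: look_time_def)
  have "\<forall>t. 0 \<le> t \<and> t \<le> S False (Suc k) \<longrightarrow> pos False t = p0 False"
  proof (intro allI impI)
    fix t assume t: "0 \<le> t \<and> t \<le> S False (Suc k)"
    show "pos False t = p0 False"
    proof (cases "t \<le> S False k")
      case True
      then show ?thesis using IH(2) t by blast
    next
      case False
      then show ?thesis
        using cycle_ok_still[OF cyc, of t] next_start t at_start by (simp add: look_time_def)
    qed
  qed
  moreover have "real (Suc k) * \<tau> \<le> S False (Suc k)"
    using next_start IH(1) cycle_gt_tau[of False k] by (simp add: algebra_simps)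
  ultimately show ?case by blast
qed

lemma lucky_mover_arrives:
  assumes exec: "exec_ok coin_alg v W C \<phi> p0 \<omega> pos S" and "\<omega> (True, 0, 0)"
    and waiter: "\<forall>t. 0 \<le> t \<and> t \<le> arrival + W True 1 \<longrightarrow> pos False t = p0 False"
    and "arrival \<le> t"
  shows "pos True t = p0 False"
proof -
  have start: "S True 0 = 0" "pos True 0 = p0 True"
    and cyc0: "cycle_ok coin_alg v W C \<phi> \<omega> pos S True 0"
    using exec unfolding exec_ok_def by auto
  have look0: "look_time S W True 0 = W True 0"
    using start by (simp add: look_time_def)
  have seen0: "pos False (W True 0) = p0 False"
    using waiter wait_nonneg[of True 0] wait_nonneg[of True 1] departure_le_arrival delay_nonneg[of True 0]
    by (simp add: departure_def)
  show ?thesis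
  proof (cases "halts_at pos S W True 0")
    case True
    have "pos True t' = p0 True" if "0 \<le> t'" for t'
      using cycle_ok_halted[OF cyc0 True wait_nonneg delay_nonneg] that start by simp
    moreover have "p0 True = p0 False"
      using True seen0 look0 calculation[of "W True 0"] wait_nonneg[of True 0] by (simp add: halts_at_def)
    ultimately show ?thesis
      using \<open>arrival \<le> t\<close> departure_nonneg departure_le_arrival by simp
  next
    case False
    have S1: "S True 1 = arrival" and at_target: "pos True arrival = p0 False"
      using cycle_ok_coin_go[OF cyc0 False \<open>\<omega> (True, 0, 0)\<close> frame_inj wait_nonneg delay_nonneg speed_pos]
        start look0 seen0 by (simp_all add: arrival_def departure_def)
    have cyc1: "cycle_ok coin_alg v W C \<phi> \<omega> pos S True 1"
      using exec False unfolding exec_ok_def by auto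
    have look1: "look_time S W True 1 = arrival + W True 1"
      using S1 by (simp add: look_time_def)
    have "pos True (look_time S W True 1) = p0 False"
      using cycle_ok_pos_at_look[OF cyc1 wait_nonneg delay_nonneg] S1 at_target by simp
    moreover have "pos False (look_time S W True 1) = p0 False"
      using waiter look1 departure_nonneg departure_le_arrival wait_nonneg[of True 1] by simp
    ultimately have "halts_at pos S W True 1"
      by (simp add: halts_at_def)
    then show ?thesis
      using cycle_ok_halted[OF cyc1 _ wait_nonneg delay_nonneg, of t] S1 at_target \<open>arrival \<le> t\<close> by simp
  qed
qed

lemma lucky_waiter_halts:
  assumes exec: "exec_ok coin_alg v W C \<phi> p0 \<omega> pos S" and "lucky \<omega>"
  obtains j where "\<forall>i<j. \<not> halts_at pos S W False i" "halts_at pos S W False j" "0 \<le> S False j"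
    "\<forall>t. 0 \<le> t \<and> t \<le> S False j \<longrightarrow> pos False t = p0 False"
proof -
  define j where "j = (LEAST j. j = patience \<or> halts_at pos S W False j)"
  have j_cases: "j = patience \<or> halts_at pos S W False j"
    unfolding j_def by (rule LeastI[of _ patience]) simp
  moreover have "j \<le> patience"
    unfolding j_def by (rule Least_le) simp
  moreover have no_halt: "\<forall>i<j. \<not> halts_at pos S W False i"
    unfolding j_def using not_less_Least by fastforce
  ultimately have start: "real j * \<tau> \<le> S False j"
    and stays: "\<forall>t. 0 \<le> t \<and> t \<le> S False j \<longrightarrow> pos False t = p0 False"
    using lucky_waiter_stays[OF exec \<open>lucky \<omega>\<close>] by blast+
  have "0 \<le> S False j"
    using tau_pos by (intro order_trans[OF _ start]) simp
  moreover have "halts_at pos S W False j"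
    if "j = patience"
  proof -
    have late: "arrival + W True 1 \<le> S False j"
      using start second_look_le_patience that by simp
    have cyc: "cycle_ok coin_alg v W C \<phi> \<omega> pos S False j"
      using exec no_halt unfolding exec_ok_def by blast
    have "pos False (look_time S W False j) = p0 False"
      using cycle_ok_pos_at_look[OF cyc wait_nonneg delay_nonneg] stays \<open>0 \<le> S False j\<close> by simp
    moreover have "pos True (look_time S W False j) = p0 False"
      using lucky_mover_arrives[OF exec _ _ ] \<open>lucky \<omega>\<close> stays late wait_nonneg[of False j]
        wait_nonneg[of True 1]
      by (auto simp: lucky_def look_time_def)
    ultimately show ?thesis
      by (simp add: halts_at_def)
  qed
  ultimately show ?thesis
    using j_cases no_halt stays that by blast
qed

lemma lucky_waiter_never_moves:
  assumes exec: "exec_ok coin_alg v W C \<phi> p0 \<omega> pos S" and "lucky \<omega>" and "0 \<le> t"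
  shows "pos False t = p0 False"
proof -
  obtain j where no_halt: "\<forall>i<j. \<not> halts_at pos S W False i" and halt: "halts_at pos S W False j"
    and "0 \<le> S False j" and stays: "\<forall>t. 0 \<le> t \<and> t \<le> S False j \<longrightarrow> pos False t = p0 False"
    using lucky_waiter_halts[OF exec \<open>lucky \<omega>\<close>] .
  have cyc: "cycle_ok coin_alg v W C \<phi> \<omega> pos S False j"
    using exec no_halt unfolding exec_ok_def by blast
  show ?thesis
  proof (cases "t \<le> S False j")
    case True
    then show ?thesis using stays \<open>0 \<le> t\<close> by blast
  next
    case False
    then show ?thesis
      using cycle_ok_halted[OF cyc halt wait_nonneg delay_nonneg, of t] stays \<open>0 \<le> S False j\<close> by simp
  qed
qed

lemma lucky_execution_gathers:
  assumes exec: "exec_ok coin_alg v W C \<phi> p0 \<omega> pos S" and "lucky \<omega>"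
  shows "gathered pos"
  unfolding gathered_def
proof (intro exI allI impI)
  fix t assume "arrival \<le> t"
  moreover have "0 \<le> arrival"
    using departure_nonneg departure_le_arrival by linarith
  ultimately show "pos True t = pos False t"
    using lucky_mover_arrives[OF exec] lucky_waiter_never_moves[OF exec \<open>lucky \<omega>\<close>] \<open>lucky \<omega>\<close>
    by (simp add: lucky_def)
qed

text \<open>An execution for lucky coins; it is needed because gather_event also demands that an
  execution exists.  The start times of the cycles of robot True after its second one are
  irrelevant, as it halts in its second cycle.\<close>

definition mover_path :: "real \<Rightarrow> point" where
  "mover_path t =
    (if t \<le> departure then p0 True
     else if t \<le> arrival
       then p0 True + ((t - departure) * v / dist (p0 True) (p0 False)) *\<^sub>R (p0 False - p0 True)
     else p0 False)"

definition witness_pos :: "bool \<Rightarrow> real \<Rightarrow> point" where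
  "witness_pos r = (if r then mover_path else (\<lambda>_. p0 False))"

definition witness_start :: "bool \<Rightarrow> nat \<Rightarrow> real" where
  "witness_start r k =
    (if r then (if k = 0 then 0 else arrival) else (\<Sum>j<k. W False j + C False j))"

lemma mover_path_before: "t \<le> departure \<Longrightarrow> mover_path t = p0 True"
  by (simp add: mover_path_def)

lemma mover_path_moving:
  "departure \<le> t \<Longrightarrow> t \<le> arrival \<Longrightarrow>
    mover_path t = p0 True + ((t - departure) * v / dist (p0 True) (p0 False)) *\<^sub>R (p0 False - p0 True)"
  by (cases "t = departure") (simp_all add: mover_path_def)

lemma mover_path_after:
  assumes "arrival \<le> t"
  shows "mover_path t = p0 False"
proof (cases "t = arrival")
  case True
  show ?thesis
  proof (cases "p0 True = p0 False")
    case False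
    then have factor: "(arrival - departure) * v / dist (p0 True) (p0 False) = 1"
      using speed_pos by (simp add: arrival_def)
    have "mover_path arrival
        = p0 True + ((arrival - departure) * v / dist (p0 True) (p0 False)) *\<^sub>R (p0 False - p0 True)"
      using departure_le_arrival by (intro mover_path_moving) simp_all
    also have "\<dots> = p0 False"
      unfolding factor by simp
    finally show ?thesis
      using True by simp
  qed (simp add: mover_path_def)
next
  case False
  then show ?thesis
    using assms departure_le_arrival by (simp add: mover_path_def)
qed

lemma witness_waiter_cycle:
  assumes "lucky \<omega>"
  shows "cycle_ok coin_alg v W C \<phi> \<omega> witness_pos witness_start False k"
proof (rule cycle_ok_idleI)
  let ?L = "look_time witness_start W False k" and ?q = "witness_pos False (witness_start False k)"
  assume apart: "witness_pos (\<not> False) ?L \<noteq> ?q"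
  have look: "?L = (\<Sum>j<k. W False j + C False j) + W False k"
    by (simp add: look_time_def witness_start_def)
  from apart have "mover_path ?L \<noteq> p0 False"
    by (simp add: witness_pos_def)
  then have "?L < arrival"
    by (meson mover_path_after not_le)
  moreover have "real k * \<tau> \<le> (\<Sum>j<k. W False j + C False j)"
    using sum_mono[of "{..<k}" "\<lambda>_. \<tau>"] cycle_gt_tau by (simp add: less_imp_le)
  ultimately have "real k * \<tau> < real patience * \<tau>"
    using look second_look_le_patience wait_nonneg[of False k] wait_nonneg[of True 1] by linarith
  then have "\<not> \<omega> (False, k, 0)"
    using \<open>lucky \<omega>\<close> tau_pos by (simp add: lucky_def)
  then show "witness_start False (Suc k) = ?L + C False k \<and>
    coin_alg (\<phi> False ?q) (\<phi> False (witness_pos (\<not> False) ?L)) (\<lambda>i. \<omega> (False, k, i)) = \<phi> False ?q"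
    by (simp add: look witness_start_def coin_alg_def)
qed (simp_all add: witness_pos_def wait_nonneg delay_nonneg)

lemma witness_mover_first_cycle:
  assumes "\<omega> (True, 0, 0)"
  shows "cycle_ok coin_alg v W C \<phi> \<omega> witness_pos witness_start True 0"
proof (cases "p0 True = p0 False")
  case True
  then have "witness_pos True t = p0 True" "witness_pos False t = p0 True" for t
    by (simp_all add: witness_pos_def mover_path_def)
  then show ?thesis
    by (intro cycle_ok_idleI) (simp_all add: wait_nonneg delay_nonneg)
next
  case False
  let ?L = "look_time witness_start W True 0" and ?q = "witness_pos True (witness_start True 0)"
  let ?s = "witness_pos (\<not> True) ?L"
  have look: "?L + C True 0 = departure"
    by (simp add: look_time_def witness_start_def departure_def)
  have q: "?q = p0 True" and s: "?s = p0 False"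
    using departure_nonneg by (simp_all add: witness_pos_def witness_start_def mover_path_before)
  have still: "\<forall>t. witness_start True 0 \<le> t \<and> t \<le> ?L + C True 0 \<longrightarrow> witness_pos True t = ?q"
    using look q by (simp add: witness_pos_def mover_path_before)
  have move: "\<exists>d. \<phi> True d = coin_alg (\<phi> True ?q) (\<phi> True ?s) (\<lambda>i. \<omega> (True, 0, i)) \<and>
      witness_start True (Suc 0) = ?L + C True 0 + dist ?q d / v \<and>
      (\<forall>t. ?L + C True 0 \<le> t \<and> t \<le> witness_start True (Suc 0) \<longrightarrow>
        witness_pos True t = ?q + ((t - (?L + C True 0)) * v / dist ?q d) *\<^sub>R (d - ?q))"
    using assms look q s
    by (intro exI[of _ "p0 False"])
       (simp add: coin_alg_def witness_start_def arrival_def witness_pos_def mover_path_moving)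
  have apart: "?s \<noteq> ?q"
    using False q s by simp
  show ?thesis
    unfolding cycle_ok_def Let_def if_not_P[OF apart] using still move by (rule conjI)
qed

lemma witness_mover_halts: "halts_at witness_pos witness_start W True 1"
  using mover_path_after[of "arrival + W True 1"] wait_nonneg[of True 1]
  by (simp add: halts_at_def look_time_def witness_start_def witness_pos_def)

lemma witness_mover_second_cycle:
  "cycle_ok coin_alg v W C \<phi> \<omega> witness_pos witness_start True 1"
proof (rule cycle_ok_idleI)
  show "witness_pos True t = witness_pos True (witness_start True 1)"
    if "witness_start True 1 \<le> t" for t
    using that mover_path_after by (simp add: witness_pos_def witness_start_def)
qed (use witness_mover_halts mover_path_after in
      \<open>simp_all add: halts_at_def look_time_def witness_pos_def witness_start_def wait_nonneg delay_nonneg\<close>)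

lemma lucky_execution_exists:
  assumes "lucky \<omega>"
  shows "exec_ok coin_alg v W C \<phi> p0 \<omega> witness_pos witness_start"
  unfolding exec_ok_def
proof (intro allI conjI impI)
  fix r k
  show "witness_start r 0 = 0"
    by (simp add: witness_start_def)
  show "witness_pos r 0 = p0 r"
    using departure_nonneg by (simp add: witness_pos_def mover_path_before)
  assume no_halt: "\<forall>j<k. \<not> halts_at witness_pos witness_start W r j"
  show "cycle_ok coin_alg v W C \<phi> \<omega> witness_pos witness_start r k"
  proof (cases r)
    case True
    then have "k = 0 \<or> k = 1"
      using no_halt witness_mover_halts by (metis One_nat_def less_Suc0 nat_neq_iff)
    then show ?thesis
      using True assms witness_mover_first_cycle witness_mover_second_cycle by (auto simp: lucky_def)
  next
    case False
    then show ?thesis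
      using assms witness_waiter_cycle by simp
  qed
qed

lemma lucky_gather_event:
  "lucky \<omega> \<Longrightarrow> \<omega> \<in> gather_event coin_alg v W C \<phi> p0"
  unfolding gather_event_def using lucky_execution_exists lucky_execution_gathers by blast

end

theorem theorem5:
  fixes \<tau> :: real
  assumes "\<tau> > 0"
  shows "\<exists>alg :: algorithm.
    \<forall>(v::real) (W::bool \<Rightarrow> nat \<Rightarrow> real) (C::bool \<Rightarrow> nat \<Rightarrow> real)
      (\<phi>::bool \<Rightarrow> point \<Rightarrow> point) (p0::bool \<Rightarrow> point).
      v > 0 \<and> (\<forall>r k. W r k \<ge> 0 \<and> C r k \<ge> 0 \<and> W r k + C r k > \<tau>) \<and>
      (\<forall>r. is_similarity (\<phi> r)) \<longrightarrow>
      (\<exists>E \<in> sets coin_space. E \<subseteq> gather_event alg v W C \<phi> p0 \<and> measure coin_space E > 0)"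
proof (intro exI[of _ coin_alg] allI impI)
  fix v :: real and W C :: "bool \<Rightarrow> nat \<Rightarrow> real"
    and \<phi> :: "bool \<Rightarrow> point \<Rightarrow> point" and p0 :: "bool \<Rightarrow> point"
  assume "v > 0 \<and> (\<forall>r k. W r k \<ge> 0 \<and> C r k \<ge> 0 \<and> W r k + C r k > \<tau>) \<and> (\<forall>r. is_similarity (\<phi> r))"
  then interpret oblivious_schedule \<tau> v W C \<phi> p0
    using assms by unfold_locales auto
  show "\<exists>E \<in> sets coin_space. E \<subseteq> gather_event coin_alg v W C \<phi> p0 \<and> measure coin_space E > 0"
    using lucky_coins_measure lucky_gather_event by blast
qed

end
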